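(* There exists $\gamma_0>0$ such that for all $0<\varepsilon,\gamma\le\gamma_0$ there exists $\eta_0>0$ such that for every $0<\eta\le\eta_0$ there exists $n_0$ such that for all $n\ge n_0$: if $H$ is a $3$-graph of order $n$ with $|\tilde N_{1,\gamma\varepsilon}(v)|\ge(1/4-3\gamma)n$ for every $v\in V(H)$, then there is a partition $\{V_1,\dots,V_d\}$ of $V(H)$ with $d\le4$ such that each $V_i$ is $(16,\eta)$-closed in $H$ and $|V_i|\ge(1/4-4\gamma)n$.
   Context: $K_4^-$ is the $3$-graph with $4$ vertices and $3$ edges. For $c\in\mathbb N$, a set $S$ is an $(x,y)$-connector of length $c$ if $S\cap\{x,y\}=\emptyset$, $|S|=4c-1$, and both $H[S\cup\{x\}]$, $H[S\cup\{y\}]$ contain $K_4^-$-factors (vertex-disjoint copies covering all vertices). $x,y$ are $(c,\eta)$-close if there are at least $\eta n^{4c-1}$ $(x,y)$-connectors of length $c$ in $H$. $\tilde N_{c,\eta}(x)$ is the set of vertices $(c,\eta)$-close to $x$. A set $U\subseteq V(H)$ is $(c,\eta)$-closed in $H$ if every two vertices of $U$ are $(c,\eta)$-close in $H$. *)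

theory Defs
  imports Complex_Main "HOL-Library.Disjoint_Sets"
begin

definition is_3graph :: "'a set \<Rightarrow> 'a set set \<Rightarrow> bool" where
  "is_3graph V E \<longleftrightarrow> finite V \<and> (\<forall>e\<in>E. e \<subseteq> V \<and> card e = 3)"

definition spans_K4m :: "'a set set \<Rightarrow> 'a set \<Rightarrow> bool" where
  "spans_K4m E Q \<longleftrightarrow> card Q = 4 \<and> card {e\<in>E. e \<subseteq> Q} \<ge> 3"

definition has_K4m_factor :: "'a set set \<Rightarrow> 'a set \<Rightarrow> bool" where
  "has_K4m_factor E S \<longleftrightarrow> (\<exists>P. partition_on S P \<and> (\<forall>Q\<in>P. spans_K4m E Q))"

definition connector :: "'a set \<Rightarrow> 'a set set \<Rightarrow> nat \<Rightarrow> 'a \<Rightarrow> 'a \<Rightarrow> 'a set \<Rightarrow> bool" where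
  "connector V E c x y S \<longleftrightarrow> S \<subseteq> V \<and> x \<notin> S \<and> y \<notin> S \<and> card S = 4 * c - 1
     \<and> has_K4m_factor E (insert x S) \<and> has_K4m_factor E (insert y S)"

definition close :: "'a set \<Rightarrow> 'a set set \<Rightarrow> nat \<Rightarrow> real \<Rightarrow> 'a \<Rightarrow> 'a \<Rightarrow> bool" where
  "close V E c \<eta> x y \<longleftrightarrow>
     real (card {S. connector V E c x y S}) \<ge> \<eta> * real (card V) ^ (4 * c - 1)"

definition closeN :: "'a set \<Rightarrow> 'a set set \<Rightarrow> nat \<Rightarrow> real \<Rightarrow> 'a \<Rightarrow> 'a set" where
  "closeN V E c \<eta> x = {y \<in> V. close V E c \<eta> x y}"

definition closed_set :: "'a set \<Rightarrow> 'a set set \<Rightarrow> nat \<Rightarrow> real \<Rightarrow> 'a set \<Rightarrow> bool" where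
  "closed_set V E c \<eta> U \<longleftrightarrow> (\<forall>x\<in>U. \<forall>y\<in>U. x \<noteq> y \<longrightarrow> close V E c \<eta> x y)"

end

theory Submission
  imports Defs
begin

text \<open>Closeness propagates: if two vertices have a linear number of common vertices that are close
  to both, joining connectors through these middle vertices shows that they are close at double
  length, and appending disjoint copies of K4^- pads any connector up to length 16. Starting from the
  closeness neighbourhoods (of size about n/4), we therefore merge vertices whose current
  neighbourhoods overlap in alpha n vertices, for up to four rounds. At each level, inclusion-exclusion
  bounds sets of pairwise non-merged vertices by 4; their maximal size decreases with the level, so it
  stabilises at some level, or everything is merged. In the stable case, a maximum such set D gives
  the parts: the vertices merged with only one centre v form a large core, internally close by
  maximality of D, and the few remaining vertices join a core in which their neighbourhood is large.\<close>

section \<open>Counting\<close>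

lemma card_le_mult_if_fibres_le:
  assumes "finite X" "f ` X \<subseteq> Y" "finite Y" "\<And>y. y \<in> Y \<Longrightarrow> card {x\<in>X. f x = y} \<le> m"
  shows "card X \<le> card Y * m"
proof -
  have "X = (\<Union>y\<in>Y. {x\<in>X. f x = y})" using assms(2) by auto
  hence "card X \<le> (\<Sum>y\<in>Y. card {x\<in>X. f x = y})" using card_UN_le[OF assms(3)] by metis
  also have "\<dots> \<le> (\<Sum>y\<in>Y. m)" by (rule sum_mono) (use assms(4) in auto)
  finally show ?thesis by simp
qed

lemma card_subsets_le_power: "finite V \<Longrightarrow> card {S. S \<subseteq> V \<and> card S = p} \<le> card V ^ p"
  by (cases "p \<le> card V") (simp_all add: n_subsets binomial_le_pow binomial_eq_0)

lemma card_subsets_containing_le_power: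
  assumes "finite V" "1 \<le> p"
  shows "card {S. S \<subseteq> V \<and> card S = p \<and> w \<in> S} \<le> card V ^ (p - 1)"
proof -
  have "card {S. S \<subseteq> V \<and> card S = p \<and> w \<in> S} \<le> card {S. S \<subseteq> V \<and> card S = p - 1}"
  proof (rule card_inj_on_le[where f = "\<lambda>S. S - {w}"])
    show "inj_on (\<lambda>S. S - {w}) {S. S \<subseteq> V \<and> card S = p \<and> w \<in> S}"
      by (rule inj_onI) (metis (no_types, lifting) insert_Diff mem_Collect_eq)
    show "(\<lambda>S. S - {w}) ` {S. S \<subseteq> V \<and> card S = p \<and> w \<in> S} \<subseteq> {S. S \<subseteq> V \<and> card S = p - 1}"
      using assms(1) by (auto intro: finite_subset)
  qed (use assms(1) in simp)
  also have "\<dots> \<le> card V ^ (p - 1)" by (rule card_subsets_le_power[OF assms(1)])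
  finally show ?thesis .
qed

lemma card_subsets_meeting_le:
  assumes "finite V" "finite W" "1 \<le> p"
  shows "card {S. S \<subseteq> V \<and> card S = p \<and> S \<inter> W \<noteq> {}} \<le> card W * card V ^ (p - 1)"
proof -
  have "{S. S \<subseteq> V \<and> card S = p \<and> S \<inter> W \<noteq> {}} \<subseteq> (\<Union>w\<in>W. {S. S \<subseteq> V \<and> card S = p \<and> w \<in> S})"
    by blast
  hence "card {S. S \<subseteq> V \<and> card S = p \<and> S \<inter> W \<noteq> {}}
      \<le> card (\<Union>w\<in>W. {S. S \<subseteq> V \<and> card S = p \<and> w \<in> S})"
    using assms(1,2) by (intro card_mono) auto
  also have "\<dots> \<le> (\<Sum>w\<in>W. card {S. S \<subseteq> V \<and> card S = p \<and> w \<in> S})"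
    by (rule card_UN_le[OF assms(2)])
  also have "\<dots> \<le> (\<Sum>w\<in>W. card V ^ (p - 1))"
    by (intro sum_mono card_subsets_containing_le_power assms(1,3))
  finally show ?thesis by simp
qed

lemma card_UN_ge_sum_minus_overlaps:
  fixes F :: "'b \<Rightarrow> 'a set"
  assumes "finite D" "\<And>x. x \<in> D \<Longrightarrow> finite (F x)"
  shows "real (card (\<Union>x\<in>D. F x))
    \<ge> (\<Sum>x\<in>D. real (card (F x))) - (\<Sum>x\<in>D. \<Sum>y\<in>D-{x}. real (card (F x \<inter> F y)))"
  using assms
proof (induction D rule: finite_induct)
  case empty thus ?case by simp
next
  case (insert a D)
  let ?U = "\<Union>x\<in>D. F x"
  let ?c = "\<lambda>x y. real (card (F x \<inter> F y))"
  have "card (F a) + card ?U = card (F a \<union> ?U) + card (F a \<inter> ?U)"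
    using insert by (intro card_Un_Int) auto
  hence union: "real (card (F a \<union> ?U)) = real (card (F a)) + real (card ?U) - real (card (F a \<inter> ?U))"
    by (metis add_diff_cancel_right' of_nat_add)
  have "F a \<inter> ?U = (\<Union>y\<in>D. F a \<inter> F y)" by auto
  hence "card (F a \<inter> ?U) \<le> (\<Sum>y\<in>D. card (F a \<inter> F y))"
    using card_UN_le[OF insert(1), of "\<lambda>y. F a \<inter> F y"] by simp
  hence overlap: "real (card (F a \<inter> ?U)) \<le> (\<Sum>y\<in>insert a D - {a}. ?c a y)"
    using insert(2) by (metis Diff_insert_absorb of_nat_le_iff of_nat_sum)
  have "(\<Sum>x\<in>D. \<Sum>y\<in>D-{x}. ?c x y) \<le> (\<Sum>x\<in>D. \<Sum>y\<in>insert a D-{x}. ?c x y)"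
    using insert(1) by (intro sum_mono sum_mono2) auto
  thus ?case using union overlap insert by simp
qed

section \<open>Connectors\<close>

lemma has_K4m_factor_Un:
  assumes "has_K4m_factor E A" "has_K4m_factor E B" "A \<inter> B = {}"
  shows "has_K4m_factor E (A \<union> B)"
proof -
  obtain P where P: "partition_on A P" "\<forall>Q\<in>P. spans_K4m E Q"
    using assms(1) unfolding has_K4m_factor_def by blast
  obtain R where R: "partition_on B R" "\<forall>Q\<in>R. spans_K4m E Q"
    using assms(2) unfolding has_K4m_factor_def by blast
  have "partition_on (A \<union> B) (P \<union> R)"
    using P(1) R(1) assms(3) by (auto simp: partition_on_def intro: disjoint_union)
  thus ?thesis using P R unfolding has_K4m_factor_def by blast
qed

lemma close_antimono: "close V E c \<eta> x y \<Longrightarrow> \<eta>' \<le> \<eta> \<Longrightarrow> close V E c \<eta>' x y"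
  unfolding close_def by (smt (verit) mult_right_mono zero_le_power of_nat_0_le_iff)

lemma close_commute: "close V E c \<eta> x y \<longleftrightarrow> close V E c \<eta> y x"
proof -
  have "{S. connector V E c x y S} = {S. connector V E c y x S}" by (auto simp: connector_def)
  thus ?thesis unfolding close_def by simp
qed

lemma closed_set_antimono: "closed_set V E c \<eta> U \<Longrightarrow> \<eta>' \<le> \<eta> \<Longrightarrow> closed_set V E c \<eta>' U"
  unfolding closed_set_def by (meson close_antimono)

lemma finite_connectors: "finite V \<Longrightarrow> finite {S. connector V E c x y S}"
  by (rule finite_subset[of _ "Pow V"]) (auto simp: connector_def)

lemma close_self_if_close:
  assumes "finite V" "close V E 1 \<eta> x y"
  shows "close V E 1 \<eta> x x"
proof -
  have "{S. connector V E 1 x y S} \<subseteq> {S. connector V E 1 x x S}" by (auto simp: connector_def)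
  hence "card {S. connector V E 1 x y S} \<le> card {S. connector V E 1 x x S}"
    using finite_connectors[OF assms(1)] by (rule card_mono[rotated])
  thus ?thesis using assms(2) unfolding close_def by (meson of_nat_le_iff order_trans)
qed

lemma connector_join:
  assumes "connector V E a x z S1" "connector V E b z y S2" "z \<in> V" "x \<noteq> z" "y \<noteq> z"
    "S1 \<inter> S2 = {}" "y \<notin> S1" "x \<notin> S2" "1 \<le> a" "1 \<le> b"
  shows "connector V E (a + b) x y (S1 \<union> insert z S2)"
proof -
  have c1: "S1 \<subseteq> V" "x \<notin> S1" "z \<notin> S1" "card S1 = 4*a-1"
    "has_K4m_factor E (insert x S1)" "has_K4m_factor E (insert z S1)"
    using assms(1) unfolding connector_def by auto
  have c2: "S2 \<subseteq> V" "z \<notin> S2" "y \<notin> S2" "card S2 = 4*b-1"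
    "has_K4m_factor E (insert z S2)" "has_K4m_factor E (insert y S2)"
    using assms(2) unfolding connector_def by auto
  have "finite S1" "finite S2" using c1(4) c2(4) assms(9,10) by (auto intro: card_ge_0_finite)
  hence "card (S1 \<union> insert z S2) = card S1 + card (insert z S2)"
    using assms(6) c1(3) by (intro card_Un_disjoint) auto
  also have "\<dots> = 4*(a+b) - 1" using c1(4) c2(2,4) \<open>finite S2\<close> assms(9,10) by simp
  finally have "card (S1 \<union> insert z S2) = 4*(a+b) - 1" .
  moreover have "has_K4m_factor E (insert x S1 \<union> insert z S2)"
    using c1(3,5) c2(5) assms(4,6,8) by (intro has_K4m_factor_Un) auto
  moreover have "has_K4m_factor E (insert z S1 \<union> insert y S2)"
    using c1(6) c2(2,6) assms(5,6,7) by (intro has_K4m_factor_Un) auto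
  moreover have "insert x (S1 \<union> insert z S2) = insert x S1 \<union> insert z S2"
    "insert y (S1 \<union> insert z S2) = insert z S1 \<union> insert y S2" by auto
  ultimately show ?thesis
    using c1(1,2) c2(1,3) assms(3,4,5,7,8) unfolding connector_def by auto
qed

lemma connector_extend:
  assumes "connector V E L x y S" "Q \<subseteq> V" "card Q = 4" "has_K4m_factor E Q"
    "Q \<inter> insert x (insert y S) = {}" "1 \<le> L"
  shows "connector V E (L + 1) x y (S \<union> Q)"
proof -
  have S: "S \<subseteq> V" "x \<notin> S" "y \<notin> S" "card S = 4*L-1"
    "has_K4m_factor E (insert x S)" "has_K4m_factor E (insert y S)"
    using assms(1) unfolding connector_def by auto
  have "finite S" "finite Q" using S(4) assms(3,6) by (auto intro: card_ge_0_finite)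
  hence "card (S \<union> Q) = 4*(L+1) - 1" using S(4) assms(3,5,6) by (subst card_Un_disjoint) auto
  moreover have "has_K4m_factor E (insert x (S \<union> Q))"
    using has_K4m_factor_Un[OF S(5) assms(4)] assms(5) by auto
  moreover have "has_K4m_factor E (insert y (S \<union> Q))"
    using has_K4m_factor_Un[OF S(6) assms(4)] assms(5) by auto
  ultimately show ?thesis using S(1-3) assms(2,5) unfolding connector_def by auto
qed

definition K4m_quads :: "'a set \<Rightarrow> 'a set set \<Rightarrow> 'a set set" where
  "K4m_quads V E = {Q. Q \<subseteq> V \<and> card Q = 4 \<and> has_K4m_factor E Q}"

lemma finite_K4m_quads: "finite V \<Longrightarrow> finite (K4m_quads V E)"
  unfolding K4m_quads_def by (rule finite_subset[of _ "Pow V"]) auto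

text \<open>Each length-1 connector S of v gives the quadruple insert v S, which arises at most 4 * 2^4 times.\<close>
lemma card_K4m_quads_ge:
  assumes fin: "finite V" and partner: "\<And>v. v \<in> V \<Longrightarrow> \<exists>w. close V E 1 \<eta> v w" and "0 \<le> \<eta>"
  shows "real (card (K4m_quads V E)) \<ge> \<eta> / 64 * real (card V) ^ 4"
proof -
  define n where "n = card V"
  define W where "W v = (SOME w. close V E 1 \<eta> v w)" for v
  have W: "close V E 1 \<eta> v (W v)" if "v \<in> V" for v
    unfolding W_def using partner[OF that] by (rule someI_ex)
  define C where "C v = {S. connector V E 1 v (W v) S}" for v
  have finC: "finite (C v)" for v unfolding C_def using finite_connectors[OF fin] .
  define X where "X = Sigma V C"
  have finX: "finite X" unfolding X_def using fin finC by auto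
  have "real (card X) = (\<Sum>v\<in>V. real (card (C v)))"
    unfolding X_def using fin finC by (simp add: card_SigmaI)
  also have "\<dots> \<ge> (\<Sum>v\<in>V. \<eta> * real n ^ 3)"
    by (rule sum_mono) (use W in \<open>auto simp: close_def C_def n_def\<close>)
  finally have X_ge: "real (card X) \<ge> \<eta> * real n ^ 4"
    by (simp add: n_def power_Suc algebra_simps numeral_eq_Suc)
  define f :: "'a \<times> 'a set \<Rightarrow> 'a set" where "f = (\<lambda>(v, S). insert v S)"
  have "f ` X \<subseteq> K4m_quads V E"
  proof
    fix T assume "T \<in> f ` X"
    then obtain v S where vS: "v \<in> V" "S \<in> C v" "T = insert v S" unfolding X_def f_def by auto
    have S: "S \<subseteq> V" "v \<notin> S" "card S = 3" "has_K4m_factor E (insert v S)"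
      using vS(2) unfolding C_def connector_def by auto
    have "finite S" using S(3) by (intro card_ge_0_finite) simp
    thus "T \<in> K4m_quads V E" unfolding K4m_quads_def vS(3) using S vS(1) by auto
  qed
  moreover have "card {u\<in>X. f u = T} \<le> 64" if "T \<in> K4m_quads V E" for T
  proof -
    have T: "card T = 4" "finite T" using that unfolding K4m_quads_def by (auto intro: card_ge_0_finite)
    have "{u\<in>X. f u = T} \<subseteq> T \<times> Pow T" unfolding f_def by auto
    hence "card {u\<in>X. f u = T} \<le> card (T \<times> Pow T)" using T by (intro card_mono) auto
    also have "\<dots> = 64" using T by (simp add: card_cartesian_product card_Pow)
    finally show ?thesis .
  qed
  ultimately have "card X \<le> card (K4m_quads V E) * 64"
    using card_le_mult_if_fibres_le[OF finX _ finite_K4m_quads[OF fin]] by blast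
  hence "real (card X) \<le> real (card (K4m_quads V E)) * 64" by (metis of_nat_le_iff of_nat_mult of_nat_numeral)
  thus ?thesis using X_ge unfolding n_def by linarith
qed

lemma card_K4m_quads_avoiding_ge:
  assumes fin: "finite V" "finite W"
    and quads: "real (card (K4m_quads V E)) \<ge> k * real (card V) ^ 4"
    and small: "2 * real (card W) \<le> k * real (card V)"
  shows "real (card {Q \<in> K4m_quads V E. Q \<inter> W = {}}) \<ge> k / 2 * real (card V) ^ 4"
proof -
  let ?n = "real (card V)"
  have "K4m_quads V E \<subseteq> {Q \<in> K4m_quads V E. Q \<inter> W = {}} \<union> {S. S \<subseteq> V \<and> card S = 4 \<and> S \<inter> W \<noteq> {}}"
    unfolding K4m_quads_def by blast
  hence "card (K4m_quads V E)
      \<le> card ({Q \<in> K4m_quads V E. Q \<inter> W = {}} \<union> {S. S \<subseteq> V \<and> card S = 4 \<and> S \<inter> W \<noteq> {}})"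
    using fin(1) finite_K4m_quads[OF fin(1)] by (intro card_mono) auto
  also have "\<dots> \<le> card {Q \<in> K4m_quads V E. Q \<inter> W = {}} + card {S. S \<subseteq> V \<and> card S = 4 \<and> S \<inter> W \<noteq> {}}"
    by (rule card_Un_le)
  also have "\<dots> \<le> card {Q \<in> K4m_quads V E. Q \<inter> W = {}} + card W * card V ^ 3"
    using card_subsets_meeting_le[OF fin, of 4] by simp
  finally have "real (card (K4m_quads V E)) \<le> real (card {Q \<in> K4m_quads V E. Q \<inter> W = {}}) + real (card W) * ?n ^ 3"
    by (metis of_nat_add of_nat_le_iff of_nat_mult of_nat_power)
  moreover have "real (card W) * ?n ^ 3 \<le> k / 2 * ?n ^ 4"
    using mult_right_mono[OF small, of "?n ^ 3"] by (simp add: power_Suc algebra_simps numeral_eq_Suc)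
  ultimately show ?thesis using quads by linarith
qed

text \<open>Appending a disjoint copy of K4^- to a connector lengthens it; each connector of length L+1
  arises from at most 4^(4L+3) pairs.\<close>
lemma close_extend:
  fixes L :: nat and \<eta> k :: real
  assumes fin: "finite V" and L: "1 \<le> L" "L \<le> 15"
    and quads: "real (card (K4m_quads V E)) \<ge> k * real (card V) ^ 4"
    and large: "k * real (card V) \<ge> 130" and "0 \<le> \<eta>" "0 \<le> k"
    and close: "close V E L \<eta> x y"
  shows "close V E (L + 1) (\<eta> * k / 4^68) x y"
proof -
  define n where "n = card V"
  define p where "p = 4*L - 1"
  define C where "C = {S. connector V E L x y S}"
  define G where "G S = {Q \<in> K4m_quads V E. Q \<inter> insert x (insert y S) = {}}" for S
  define X where "X = Sigma C G"
  define Y where "Y = {T. connector V E (L + 1) x y T}"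
  have finC: "finite C" unfolding C_def using finite_connectors[OF fin] .
  have finG: "finite (G S)" for S unfolding G_def using finite_K4m_quads[OF fin] by auto
  have G_ge: "real (card (G S)) \<ge> k / 2 * real n ^ 4" if "S \<in> C" for S
  proof -
    have "card S = p" "finite S" using that L unfolding C_def connector_def p_def
      by (auto intro: card_ge_0_finite)
    hence "card (insert x (insert y S)) \<le> p + 2" by (simp add: card_insert_if)
    hence "2 * real (card (insert x (insert y S))) \<le> k * real (card V)"
      using L large unfolding p_def by linarith
    thus ?thesis unfolding G_def n_def using fin \<open>finite S\<close>
      by (intro card_K4m_quads_avoiding_ge[OF fin _ quads]) auto
  qed
  have "real (card X) = (\<Sum>S\<in>C. real (card (G S)))"
    unfolding X_def using finC finG by (simp add: card_SigmaI)
  also have "\<dots> \<ge> real (card C) * (k / 2 * real n ^ 4)"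
    using sum_mono[of C "\<lambda>_. k / 2 * real n ^ 4", OF G_ge] by simp
  moreover have "real (card C) * (k / 2 * real n ^ 4) \<ge> (\<eta> * real n ^ p) * (k / 2 * real n ^ 4)"
    using close \<open>0 \<le> k\<close> unfolding close_def C_def n_def p_def by (intro mult_right_mono) auto
  ultimately have X_ge: "real (card X) \<ge> (\<eta> * real n ^ p) * (k / 2 * real n ^ 4)" by linarith
  have "(\<lambda>(S, Q). S \<union> Q) ` X \<subseteq> Y"
  proof
    fix T assume "T \<in> (\<lambda>(S, Q). S \<union> Q) ` X"
    then obtain S Q where SQ: "S \<in> C" "Q \<in> G S" "T = S \<union> Q" unfolding X_def by auto
    have "connector V E (L + 1) x y (S \<union> Q)"
      using SQ(1,2) L(1) unfolding C_def G_def K4m_quads_def by (intro connector_extend) auto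
    thus "T \<in> Y" using SQ(3) unfolding Y_def by simp
  qed
  moreover have "card {u\<in>X. (\<lambda>(S, Q). S \<union> Q) u = T} \<le> 4^67" if "T \<in> Y" for T
  proof -
    have T: "card T = 4*(L+1) - 1" "finite T"
      using that fin unfolding Y_def connector_def by (auto intro: finite_subset)
    have "card {u\<in>X. (\<lambda>(S, Q). S \<union> Q) u = T} \<le> card (Pow T \<times> Pow T)"
      using T by (intro card_mono) auto
    also have "\<dots> = 4 ^ card T" using T by (simp add: card_cartesian_product card_Pow power_mult_distrib[symmetric])
    also have "\<dots> \<le> 4^67" using T L by (intro power_increasing) auto
    finally show ?thesis .
  qed
  ultimately have "card X \<le> card Y * 4^67"
    using finC finG finite_connectors[OF fin] unfolding X_def Y_def
    by (intro card_le_mult_if_fibres_le) auto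
  hence X_le: "real (card X) \<le> real (card Y) * 4^67"
    by (metis of_nat_le_iff of_nat_mult of_nat_numeral of_nat_power)
  define t where "t = \<eta> * k / 4^68 * real n ^ (4 * (L + 1) - 1)"
  have "4 * (L + 1) - 1 = p + 4" using L by (simp add: p_def)
  hence "(\<eta> * real n ^ p) * (k / 2 * real n ^ 4) = (2 * t) * 4^67"
    unfolding t_def by (simp only:) (simp add: power_add)
  hence "2 * t \<le> real (card Y)" using X_ge X_le by simp
  moreover have "0 \<le> t" unfolding t_def using \<open>0 \<le> \<eta>\<close> \<open>0 \<le> k\<close> by simp
  ultimately show ?thesis unfolding close_def Y_def t_def n_def by linarith
qed

lemma card_colliding_pairs_le:
  assumes fin: "finite V" and "1 \<le> p" "1 \<le> q"
  shows "card {(S1, S2). S1 \<subseteq> V \<and> card S1 = p \<and> S2 \<subseteq> V \<and> card S2 = q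
      \<and> (S1 \<inter> S2 \<noteq> {} \<or> y \<in> S1 \<or> x \<in> S2)} \<le> 3 * card V ^ (p + q - 1)"
proof -
  define n where "n = card V"
  define Sk where "Sk k = {S. S \<subseteq> V \<and> card S = k}" for k
  define Sw where "Sw k w = {S. S \<subseteq> V \<and> card S = k \<and> w \<in> S}" for k w
  have finSk: "finite (Sk k)" for k using fin unfolding Sk_def by simp
  have finSw: "finite (Sw k w)" for k w
    by (rule finite_subset[OF _ finSk[of k]]) (auto simp: Sw_def Sk_def)
  have cSk: "card (Sk k) \<le> n ^ k" for k unfolding Sk_def n_def using card_subsets_le_power[OF fin] .
  have cSw: "card (Sw k w) \<le> n ^ (k - 1)" if "1 \<le> k" for k w
    unfolding Sw_def n_def using card_subsets_containing_le_power[OF fin that] .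
  have meet: "card (\<Union>w\<in>V. Sw p w \<times> Sw q w) \<le> n ^ (p + q - 1)"
  proof -
    have "card (\<Union>w\<in>V. Sw p w \<times> Sw q w) \<le> (\<Sum>w\<in>V. card (Sw p w \<times> Sw q w))"
      by (rule card_UN_le[OF fin])
    also have "\<dots> \<le> (\<Sum>w\<in>V. n ^ (p - 1) * n ^ (q - 1))"
      using cSw assms(2,3) by (intro sum_mono) (simp add: card_cartesian_product mult_mono)
    also have "\<dots> = n ^ (1 + (p - 1) + (q - 1))" by (simp add: n_def power_add)
    finally show ?thesis using assms(2,3) by simp
  qed
  have y_in: "card (Sw p y \<times> Sk q) \<le> n ^ (p + q - 1)"
    using mult_le_mono[OF cSw[OF assms(2), of y] cSk[of q]] assms(2)
    by (simp add: card_cartesian_product power_add[symmetric])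
  have x_in: "card (Sk p \<times> Sw q x) \<le> n ^ (p + q - 1)"
    using mult_le_mono[OF cSk[of p] cSw[OF assms(3), of x]] assms(3)
    by (simp add: card_cartesian_product power_add[symmetric])
  have "{(S1, S2). S1 \<subseteq> V \<and> card S1 = p \<and> S2 \<subseteq> V \<and> card S2 = q \<and> (S1 \<inter> S2 \<noteq> {} \<or> y \<in> S1 \<or> x \<in> S2)}
      \<subseteq> (\<Union>w\<in>V. Sw p w \<times> Sw q w) \<union> (Sw p y \<times> Sk q) \<union> (Sk p \<times> Sw q x)"
    unfolding Sk_def Sw_def by blast
  hence "card {(S1, S2). S1 \<subseteq> V \<and> card S1 = p \<and> S2 \<subseteq> V \<and> card S2 = q \<and> (S1 \<inter> S2 \<noteq> {} \<or> y \<in> S1 \<or> x \<in> S2)}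
      \<le> card ((\<Union>w\<in>V. Sw p w \<times> Sw q w) \<union> (Sw p y \<times> Sk q) \<union> (Sk p \<times> Sw q x))"
    using fin finSk finSw by (intro card_mono) auto
  also have "\<dots> \<le> card (\<Union>w\<in>V. Sw p w \<times> Sw q w) + card (Sw p y \<times> Sk q) + card (Sk p \<times> Sw q x)"
    by (meson card_Un_le add_le_mono le_trans order_refl)
  finally show ?thesis using meet y_in x_in unfolding n_def by linarith
qed

lemma card_disjoint_connector_pairs_ge:
  fixes \<eta>1 \<eta>2 :: real
  assumes fin: "finite V" and "1 \<le> a" "1 \<le> b"
    and close1: "close V E a \<eta>1 x z" and close2: "close V E b \<eta>2 z y"
    and "0 < \<eta>1" "0 < \<eta>2" and large: "6 \<le> real (card V) * \<eta>1 * \<eta>2"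
  shows "real (card {(S1, S2). connector V E a x z S1 \<and> connector V E b z y S2
      \<and> S1 \<inter> S2 = {} \<and> y \<notin> S1 \<and> x \<notin> S2}) \<ge> \<eta>1 * \<eta>2 * real (card V) ^ (4*a - 1 + (4*b - 1)) / 2"
    (is "real (card ?G) \<ge> _")
proof -
  define n where "n = card V"
  define p where "p = 4*a - 1"
  define q where "q = 4*b - 1"
  define C1 where "C1 = {S. connector V E a x z S}"
  define C2 where "C2 = {S. connector V E b z y S}"
  define B where "B = {(S1, S2). S1 \<subseteq> V \<and> card S1 = p \<and> S2 \<subseteq> V \<and> card S2 = q
      \<and> (S1 \<inter> S2 \<noteq> {} \<or> y \<in> S1 \<or> x \<in> S2)}"
  have pq: "1 \<le> p" "1 \<le> q" using assms(2,3) unfolding p_def q_def by auto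
  have finC: "finite C1" "finite C2" unfolding C1_def C2_def using finite_connectors[OF fin] by auto
  have finB: "finite B"
    by (rule finite_subset[of _ "Pow V \<times> Pow V"]) (use fin in \<open>auto simp: B_def\<close>)
  have "C1 \<times> C2 \<subseteq> ?G \<union> B" unfolding C1_def C2_def B_def p_def q_def connector_def by auto
  moreover have "finite ?G"
    by (rule finite_subset[OF _ finite_SigmaI[OF finC]]) (auto simp: C1_def C2_def)
  ultimately have "card (C1 \<times> C2) \<le> card (?G \<union> B)"
    using finB by (intro card_mono) auto
  hence "card C1 * card C2 \<le> card ?G + card B"
    using card_Un_le[of ?G B] by (simp add: card_cartesian_product)
  hence "real (card C1) * real (card C2) \<le> real (card ?G) + real (card B)"
    unfolding of_nat_mult[symmetric] of_nat_add[symmetric] of_nat_le_iff .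
  moreover have "real (card C1) * real (card C2) \<ge> (\<eta>1 * real n ^ p) * (\<eta>2 * real n ^ q)"
    using close1 close2 assms(6,7) unfolding close_def C1_def C2_def n_def p_def q_def
    by (intro mult_mono) auto
  moreover have "real (card B) \<le> 3 * real n ^ (p + q - 1)"
    using of_nat_le_iff[THEN iffD2, OF card_colliding_pairs_le[OF fin pq, of y x]]
    unfolding B_def n_def by simp
  moreover have "3 * real n ^ (p + q - 1) \<le> \<eta>1 * \<eta>2 * real n ^ (p + q) / 2"
  proof -
    have "real n ^ (p + q) = real n * real n ^ (p + q - 1)"
      using pq by (metis Suc_diff_1 add_is_0 not_one_le_zero not_gr0 power_Suc)
    moreover have "3 \<le> \<eta>1 * \<eta>2 / 2 * real n" using large by (simp add: n_def algebra_simps)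
    ultimately have "3 * real n ^ (p + q - 1) \<le> (\<eta>1 * \<eta>2 / 2 * real n) * real n ^ (p + q - 1)"
      by (simp add: mult_right_mono)
    also have "\<dots> = \<eta>1 * \<eta>2 * real n ^ (p + q) / 2" using \<open>real n ^ (p + q) = _\<close> by simp
    finally show ?thesis .
  qed
  moreover have "(\<eta>1 * real n ^ p) * (\<eta>2 * real n ^ q) = \<eta>1 * \<eta>2 * real n ^ (p + q)"
    by (simp add: power_add algebra_simps)
  ultimately have "real (card ?G) \<ge> \<eta>1 * \<eta>2 * real n ^ (p + q) / 2" by linarith
  thus ?thesis by (simp add: n_def p_def q_def)
qed

text \<open>Joining connectors through the middle vertices z gives many connectors of x and y, and each
  arises at most 4^66 times.\<close>
lemma close_via_middle:
  fixes a b :: nat and \<eta>1 \<eta>2 \<zeta> :: real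
  assumes fin: "finite V" and "1 \<le> a" "1 \<le> b" "a + b \<le> 16"
    and Z: "Z \<subseteq> V" "x \<notin> Z" "y \<notin> Z" "real (card Z) \<ge> \<zeta> * real (card V)"
    and close1: "\<And>z. z \<in> Z \<Longrightarrow> close V E a \<eta>1 x z"
    and close2: "\<And>z. z \<in> Z \<Longrightarrow> close V E b \<eta>2 z y"
    and "0 < \<eta>1" "0 < \<eta>2" "0 \<le> \<zeta>" and large: "6 \<le> real (card V) * \<eta>1 * \<eta>2"
  shows "close V E (a + b) (\<zeta> * \<eta>1 * \<eta>2 / 4^67) x y"
proof -
  define n where "n = card V"
  define m where "m = 4*a - 1 + (4*b - 1)"
  define G where "G z = {(S1, S2). connector V E a x z S1 \<and> connector V E b z y S2
      \<and> S1 \<inter> S2 = {} \<and> y \<notin> S1 \<and> x \<notin> S2}" for z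
  define X where "X = Sigma Z G"
  define Y where "Y = {T. connector V E (a + b) x y T}"
  define f :: "'a \<times> 'a set \<times> 'a set \<Rightarrow> 'a set" where "f = (\<lambda>(z, S1, S2). S1 \<union> insert z S2)"
  have finZ: "finite Z" using finite_subset[OF Z(1) fin] .
  have finG: "finite (G z)" for z
    by (rule finite_subset[of _ "Pow V \<times> Pow V"]) (use fin in \<open>auto simp: G_def connector_def\<close>)
  have "real (card X) = (\<Sum>z\<in>Z. real (card (G z)))"
    unfolding X_def using finZ finG by (simp add: card_SigmaI)
  also have "\<dots> \<ge> (\<Sum>z\<in>Z. \<eta>1 * \<eta>2 * real n ^ m / 2)"
    unfolding G_def n_def m_def using assms(2,3,11,12) large close1 close2
    by (intro sum_mono card_disjoint_connector_pairs_ge[OF fin]) auto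
  moreover have "real (card Z) * (\<eta>1 * \<eta>2 * real n ^ m / 2) \<ge> (\<zeta> * real n) * (\<eta>1 * \<eta>2 * real n ^ m / 2)"
    using Z(4) assms(11,12) by (intro mult_right_mono) (auto simp: n_def)
  ultimately have X_ge: "real (card X) \<ge> \<zeta> * \<eta>1 * \<eta>2 / 2 * real n ^ (m + 1)" by (simp add: algebra_simps)
  have "f ` X \<subseteq> Y"
  proof
    fix T assume "T \<in> f ` X"
    then obtain z S1 S2 where zS: "z \<in> Z" "(S1, S2) \<in> G z" "T = S1 \<union> insert z S2"
      unfolding X_def f_def by auto
    show "T \<in> Y" unfolding Y_def zS(3) mem_Collect_eq
      by (rule connector_join) (use zS Z assms(2,3) in \<open>auto simp: G_def\<close>)
  qed
  moreover have "card {u\<in>X. f u = T} \<le> 4^66" if "T \<in> Y" for T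
  proof -
    have T: "card T = 4*(a+b) - 1" "finite T" using that fin unfolding Y_def connector_def
      by (auto intro: finite_subset)
    have "card {u\<in>X. f u = T} \<le> card (T \<times> Pow T \<times> Pow T)"
      using T by (intro card_mono) (auto simp: f_def)
    also have "\<dots> = card T * 4 ^ card T"
      using T by (simp add: card_cartesian_product card_Pow power_mult_distrib[symmetric])
    also have "\<dots> \<le> 64 * 4^63" using T assms(4) by (intro mult_mono power_increasing) auto
    finally show ?thesis by simp
  qed
  ultimately have "card X \<le> card Y * 4^66"
    using finZ finG finite_connectors[OF fin] unfolding X_def Y_def
    by (intro card_le_mult_if_fibres_le) auto
  hence "real (card X) \<le> real (card Y * 4^66)" by (simp only: of_nat_le_iff)
  hence "real (card X) \<le> real (card Y) * 4^66" by simp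
  moreover have "m + 1 = 4 * (a + b) - 1" using assms(2,3) by (simp add: m_def)
  moreover have "0 \<le> \<zeta> * \<eta>1 * \<eta>2 / 4^67 * real n ^ (m + 1)" using assms(11-13) by simp
  ultimately show ?thesis using X_ge unfolding close_def Y_def n_def by simp
qed

section \<open>Iterated closeness neighbourhoods\<close>

text \<open>The vertices of reach V E beta alpha j x are close to x at length 2^j, with constant
  reach_eta beta alpha j (close_if_mem_reach).\<close>
primrec reach :: "'a set \<Rightarrow> 'a set set \<Rightarrow> real \<Rightarrow> real \<Rightarrow> nat \<Rightarrow> 'a \<Rightarrow> 'a set" where
  "reach V E \<beta> \<alpha> 0 x = closeN V E 1 \<beta> x"
| "reach V E \<beta> \<alpha> (Suc j) x = reach V E \<beta> \<alpha> j x \<union>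
     {y \<in> V. real (card (reach V E \<beta> \<alpha> j x \<inter> reach V E \<beta> \<alpha> j y)) \<ge> \<alpha> * real (card V)}"

declare reach.simps(2) [simp del]

text \<open>The factor lost by appending one copy of K4^-: there are at least beta/64 n^4 copies
  (card_K4m_quads_ge) and close_extend loses 4^68 more.\<close>
definition ext_factor :: "real \<Rightarrow> real" where
  "ext_factor \<beta> = \<beta> / 64 / 4^68"

text \<open>The factor ext_factor^16 pays for lengthening a pair of level j from 2^j to 2^(j+1).\<close>
primrec reach_eta :: "real \<Rightarrow> real \<Rightarrow> nat \<Rightarrow> real" where
  "reach_eta \<beta> \<alpha> 0 = \<beta>"
| "reach_eta \<beta> \<alpha> (Suc j) = \<alpha> / 2 * reach_eta \<beta> \<alpha> j * reach_eta \<beta> \<alpha> j / 4^67 * ext_factor \<beta> ^ 16"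

definition stray_core_eta :: "real \<Rightarrow> real \<Rightarrow> real" where
  "stray_core_eta \<beta> \<alpha> = \<alpha> / 2 * \<beta> * reach_eta \<beta> \<alpha> 4 / 4^67"

definition stray_pair_eta :: "real \<Rightarrow> real \<Rightarrow> real" where
  "stray_pair_eta \<beta> \<alpha> = \<alpha> / 2 * \<beta> * stray_core_eta \<beta> \<alpha> / 4^67"

definition part_eta :: "real \<Rightarrow> real \<Rightarrow> real" where
  "part_eta \<beta> \<alpha> = stray_pair_eta \<beta> \<alpha> * ext_factor \<beta> ^ 16"

text \<open>Each summand gives one of the lower bounds on n used below (large_ext, large_reach, \<dots>).\<close>
definition order_threshold :: "real \<Rightarrow> real \<Rightarrow> real" where
  "order_threshold \<beta> \<alpha> = 8320 / \<beta> + (\<Sum>j<4. 6 / (reach_eta \<beta> \<alpha> j * reach_eta \<beta> \<alpha> j)) + 40 / \<alpha>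
     + 6 / (\<beta> * reach_eta \<beta> \<alpha> 4) + 6 / (\<beta> * stray_core_eta \<beta> \<alpha>)"

lemma reach_eta_pos: "0 < \<beta> \<Longrightarrow> 0 < \<alpha> \<Longrightarrow> 0 < reach_eta \<beta> \<alpha> j"
  by (induction j) (simp_all add: ext_factor_def)

lemma stray_core_eta_pos: "0 < \<beta> \<Longrightarrow> 0 < \<alpha> \<Longrightarrow> 0 < stray_core_eta \<beta> \<alpha>"
  unfolding stray_core_eta_def using reach_eta_pos by simp

lemma part_eta_pos: "0 < \<beta> \<Longrightarrow> 0 < \<alpha> \<Longrightarrow> 0 < part_eta \<beta> \<alpha>"
  unfolding part_eta_def stray_pair_eta_def ext_factor_def using stray_core_eta_pos by simp

locale closeness_degree =
  fixes V :: "'a set" and E :: "'a set set" and \<beta> \<gamma> :: real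
  assumes finite_V: "finite V"
    and \<beta>: "0 < \<beta>" "\<beta> \<le> 1" and \<gamma>: "0 < \<gamma>" "\<gamma> \<le> 1/100"
    and degree: "\<And>v. v \<in> V \<Longrightarrow> real (card (closeN V E 1 \<beta> v)) \<ge> (1/4 - 3*\<gamma>) * real (card V)"
    and large: "order_threshold \<beta> (\<gamma> / 100) \<le> real (card V)"
begin

abbreviation \<alpha> :: real where "\<alpha> \<equiv> \<gamma> / 100"
abbreviation R :: "nat \<Rightarrow> 'a \<Rightarrow> 'a set" where "R j x \<equiv> reach V E \<beta> \<alpha> j x"
abbreviation \<theta> :: real where "\<theta> \<equiv> ext_factor \<beta>"

lemma \<alpha>_pos: "0 < \<alpha>" and \<alpha>_le: "\<alpha> \<le> 1/10000" using \<gamma> by auto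

lemma \<theta>_pos: "0 < \<theta>" and \<theta>_le_1: "\<theta> \<le> 1" using \<beta> unfolding ext_factor_def by auto

lemma large_terms:
  "8320 / \<beta> \<le> real (card V)" "(\<Sum>j<4. 6 / (reach_eta \<beta> \<alpha> j * reach_eta \<beta> \<alpha> j)) \<le> real (card V)"
  "40 / \<alpha> \<le> real (card V)" "6 / (\<beta> * reach_eta \<beta> \<alpha> 4) \<le> real (card V)"
  "6 / (\<beta> * stray_core_eta \<beta> \<alpha>) \<le> real (card V)"
proof -
  have "0 \<le> 8320 / \<beta>" "0 \<le> (\<Sum>j<4. 6 / (reach_eta \<beta> \<alpha> j * reach_eta \<beta> \<alpha> j))" "0 \<le> 40 / \<alpha>"
    "0 \<le> 6 / (\<beta> * reach_eta \<beta> \<alpha> 4)" "0 \<le> 6 / (\<beta> * stray_core_eta \<beta> \<alpha>)"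
    using \<beta> \<alpha>_pos reach_eta_pos[OF \<beta>(1) \<alpha>_pos] stray_core_eta_pos[OF \<beta>(1) \<alpha>_pos]
    by (auto intro!: sum_nonneg intro: less_imp_le mult_pos_pos)
  thus "8320 / \<beta> \<le> real (card V)" "(\<Sum>j<4. 6 / (reach_eta \<beta> \<alpha> j * reach_eta \<beta> \<alpha> j)) \<le> real (card V)"
    "40 / \<alpha> \<le> real (card V)" "6 / (\<beta> * reach_eta \<beta> \<alpha> 4) \<le> real (card V)"
    "6 / (\<beta> * stray_core_eta \<beta> \<alpha>) \<le> real (card V)"
    using large unfolding order_threshold_def by linarith+
qed

lemma large_ext: "130 \<le> real (card V) * (\<beta> / 64)"
  using large_terms(1) \<beta> by (simp add: pos_divide_le_eq)

lemma large_reach: "j < 4 \<Longrightarrow> 6 \<le> real (card V) * reach_eta \<beta> \<alpha> j * reach_eta \<beta> \<alpha> j"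
proof -
  assume "j < 4"
  hence "6 / (reach_eta \<beta> \<alpha> j * reach_eta \<beta> \<alpha> j) \<le> real (card V)"
    using large_terms(2) reach_eta_pos[OF \<beta>(1) \<alpha>_pos]
    by (meson finite_lessThan lessThan_iff member_le_sum order_trans divide_nonneg_pos
        zero_le_numeral mult_pos_pos)
  thus ?thesis using reach_eta_pos[OF \<beta>(1) \<alpha>_pos, of j] by (simp add: pos_divide_le_eq mult.assoc)
qed

lemma large_\<alpha>: "40 \<le> real (card V) * \<alpha>"
  using large_terms(3) \<alpha>_pos by (simp add: pos_divide_le_eq)

lemma large_core: "6 \<le> real (card V) * \<beta> * reach_eta \<beta> \<alpha> 4"
  using large_terms(4) \<beta>(1) reach_eta_pos[OF \<beta>(1) \<alpha>_pos, of 4] by (simp add: pos_divide_le_eq mult.assoc)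

lemma large_stray: "6 \<le> real (card V) * \<beta> * stray_core_eta \<beta> \<alpha>"
  using large_terms(5) \<beta>(1) stray_core_eta_pos[OF \<beta>(1) \<alpha>_pos] by (simp add: pos_divide_le_eq mult.assoc)

lemma card_V_pos: "0 < real (card V)"
  using large_\<alpha> \<alpha>_pos by (smt (verit) mult_nonpos_nonneg of_nat_0_le_iff)

lemma V_nonempty: "V \<noteq> {}"
  using card_V_pos by auto

lemma close_partner: "v \<in> V \<Longrightarrow> \<exists>w. close V E 1 \<beta> v w"
proof -
  assume "v \<in> V"
  have "0 < (1/4 - 3*\<gamma>) * real (card V)" using \<gamma> card_V_pos by simp
  hence "closeN V E 1 \<beta> v \<noteq> {}" using degree[OF \<open>v \<in> V\<close>] by auto
  thus ?thesis unfolding closeN_def by auto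
qed

lemma close_lengthen:
  assumes "close V E L \<eta> x y" "1 \<le> L" "L + m \<le> 16" "0 \<le> \<eta>"
  shows "close V E (L + m) (\<eta> * \<theta> ^ m) x y"
  using assms(3)
proof (induction m)
  case 0 thus ?case using assms(1) by simp
next
  case (Suc m)
  have quads: "real (card (K4m_quads V E)) \<ge> \<beta> / 64 * real (card V) ^ 4"
    using card_K4m_quads_ge[OF finite_V close_partner] \<beta> by simp
  have "close V E (L + m + 1) (\<eta> * \<theta> ^ m * (\<beta> / 64) / 4^68) x y"
    using Suc assms(2,4) large_ext \<theta>_pos \<beta>
    by (intro close_extend[OF finite_V _ _ quads]) (auto simp: mult.commute)
  thus ?case unfolding ext_factor_def by (simp add: algebra_simps)
qed

lemma close_at_16:
  assumes "close V E L \<eta> x y" "1 \<le> L" "L \<le> 16" "0 \<le> \<eta>"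
  shows "close V E 16 (\<eta> * \<theta> ^ 16) x y"
proof -
  have "close V E (L + (16 - L)) (\<eta> * \<theta> ^ (16 - L)) x y"
    using assms by (intro close_lengthen) auto
  moreover have "\<eta> * \<theta> ^ 16 \<le> \<eta> * \<theta> ^ (16 - L)"
    using assms(4) \<theta>_pos \<theta>_le_1 by (intro mult_left_mono power_decreasing) auto
  ultimately show ?thesis using assms(3) by (auto intro: close_antimono)
qed

lemma reach_eta_Suc_le: "reach_eta \<beta> \<alpha> (Suc j) \<le> reach_eta \<beta> \<alpha> j * \<theta> ^ 16"
proof -
  have pos: "0 < reach_eta \<beta> \<alpha> i" for i using reach_eta_pos[OF \<beta>(1) \<alpha>_pos] .
  have step: "reach_eta \<beta> \<alpha> (Suc i) \<le> reach_eta \<beta> \<alpha> i * \<theta> ^ 16" if "reach_eta \<beta> \<alpha> i \<le> \<beta>" for i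
  proof -
    have "\<alpha> / 2 * reach_eta \<beta> \<alpha> i \<le> 1" using that pos[of i] \<alpha>_le \<alpha>_pos \<beta> by (intro mult_le_one) auto
    hence "\<alpha> / 2 * reach_eta \<beta> \<alpha> i / 4^67 \<le> 1" by simp
    thus ?thesis using mult_left_mono[of _ 1 "reach_eta \<beta> \<alpha> i * \<theta> ^ 16"] pos \<theta>_pos
      by (simp add: algebra_simps)
  qed
  have le: "reach_eta \<beta> \<alpha> i \<le> \<beta>" for i
  proof (induction i)
    case (Suc i)
    have "\<theta> ^ 16 \<le> 1" using \<theta>_pos \<theta>_le_1 by (simp add: power_le_one)
    hence "reach_eta \<beta> \<alpha> i * \<theta> ^ 16 \<le> reach_eta \<beta> \<alpha> i" using pos[of i] by (simp add: mult_left_le)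
    thus ?case using step[OF Suc] Suc by linarith
  qed simp
  show ?thesis by (rule step[OF le])
qed

lemma reach_eta_antimono: "i \<le> j \<Longrightarrow> reach_eta \<beta> \<alpha> j \<le> reach_eta \<beta> \<alpha> i"
proof (induction j)
  case (Suc j)
  have "\<theta> ^ 16 \<le> 1" using \<theta>_pos \<theta>_le_1 by (simp add: power_le_one)
  hence "reach_eta \<beta> \<alpha> j * \<theta> ^ 16 \<le> reach_eta \<beta> \<alpha> j"
    using reach_eta_pos[OF \<beta>(1) \<alpha>_pos, of j] by (simp add: mult_left_le)
  hence "reach_eta \<beta> \<alpha> (Suc j) \<le> reach_eta \<beta> \<alpha> j" using reach_eta_Suc_le[of j] by linarith
  thus ?case using Suc by (cases "i = Suc j") auto
qed simp

lemma reach_subset: "R j x \<subseteq> V"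
  by (induction j) (auto simp: closeN_def reach.simps)

lemma finite_reach: "finite (R j x)"
  using finite_subset[OF reach_subset finite_V] .

lemma reach_mono: "i \<le> j \<Longrightarrow> R i x \<subseteq> R j x"
  by (induction j) (auto simp: le_Suc_eq reach.simps)

lemma reach_commute: "x \<in> V \<Longrightarrow> y \<in> V \<Longrightarrow> y \<in> R j x \<longleftrightarrow> x \<in> R j y"
proof (induction j)
  case 0 thus ?case using close_commute[of V E 1 \<beta> x y] by (auto simp: closeN_def)
qed (auto simp: Int_commute reach.simps)

lemma self_mem_reach: "x \<in> V \<Longrightarrow> x \<in> R j x"
proof -
  assume "x \<in> V"
  then obtain w where "close V E 1 \<beta> x w" using close_partner by blast
  hence "x \<in> R 0 x" using close_self_if_close[OF finite_V] \<open>x \<in> V\<close> by (simp add: closeN_def)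
  thus ?thesis using reach_mono[of 0 j x] by blast
qed

lemma card_reach_ge: "x \<in> V \<Longrightarrow> real (card (R j x)) \<ge> (1/4 - 3*\<gamma>) * real (card V)"
  using degree[of x] card_mono[OF finite_reach reach_mono[of 0 j x]] by simp

text \<open>The common part of R j x and R j y supplies the middle vertices for close_via_middle.\<close>
lemma close_if_large_overlap:
  assumes "j < 4" "x \<in> V" "y \<in> V" "real (card (R j x \<inter> R j y)) \<ge> \<alpha> * real (card V)"
    and IH: "\<And>u v. u \<in> V \<Longrightarrow> v \<in> R j u \<Longrightarrow> close V E (2^j) (reach_eta \<beta> \<alpha> j) u v"
  shows "close V E (2^Suc j) (reach_eta \<beta> \<alpha> (Suc j)) x y"
proof -
  define Z where "Z = R j x \<inter> R j y - {x, y}"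
  have "card (R j x \<inter> R j y) \<le> card (Z \<union> {x, y})"
    using finite_reach[of j x] by (intro card_mono) (auto simp: Z_def)
  also have "\<dots> \<le> card Z + card {x, y}" by (rule card_Un_le)
  also have "\<dots> \<le> card Z + 2" by (simp add: card_insert_if)
  finally have "real (card (R j x \<inter> R j y)) \<le> real (card Z) + 2" by linarith
  hence "real (card Z) \<ge> \<alpha> / 2 * real (card V)" using assms(4) large_\<alpha> by (simp add: algebra_simps)
  moreover have "Z \<subseteq> V" "x \<notin> Z" "y \<notin> Z" unfolding Z_def using reach_subset by auto
  moreover have "close V E (2^j) (reach_eta \<beta> \<alpha> j) x z" if "z \<in> Z" for z
    using that IH[OF assms(2)] unfolding Z_def by auto
  moreover have "close V E (2^j) (reach_eta \<beta> \<alpha> j) z y" if "z \<in> Z" for z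
    using that IH[of z y] reach_commute[of z y j] reach_subset assms(3) unfolding Z_def by auto
  moreover have "(2::nat)^j \<le> 8" using power_increasing[of j 3 "2::nat"] assms(1) by simp
  ultimately have "close V E (2^j + 2^j) (\<alpha> / 2 * reach_eta \<beta> \<alpha> j * reach_eta \<beta> \<alpha> j / 4^67) x y"
    using reach_eta_pos[OF \<beta>(1) \<alpha>_pos, of j] \<alpha>_pos large_reach[OF assms(1)]
    by (intro close_via_middle[OF finite_V]) auto
  moreover have "reach_eta \<beta> \<alpha> (Suc j) \<le> \<alpha> / 2 * reach_eta \<beta> \<alpha> j * reach_eta \<beta> \<alpha> j / 4^67"
    using \<theta>_pos \<theta>_le_1 \<alpha>_pos reach_eta_pos[OF \<beta>(1) \<alpha>_pos, of j]
    by (simp add: mult_left_le power_le_one)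
  ultimately show ?thesis by (auto intro: close_antimono simp: mult_2)
qed

lemma close_if_mem_reach:
  "j \<le> 4 \<Longrightarrow> x \<in> V \<Longrightarrow> y \<in> R j x \<Longrightarrow> close V E (2^j) (reach_eta \<beta> \<alpha> j) x y"
proof (induction j arbitrary: x y)
  case 0 thus ?case by (simp add: closeN_def)
next
  case (Suc j)
  have IH: "close V E (2^j) (reach_eta \<beta> \<alpha> j) u v" if "u \<in> V" "v \<in> R j u" for u v
    using Suc.IH that Suc.prems(1) by simp
  show ?case
  proof (cases "y \<in> R j x")
    case True
    have "(2::nat)^j \<le> 8" using power_increasing[of j 3 "2::nat"] Suc.prems(1) by simp
    hence "close V E (2^j + 2^j) (reach_eta \<beta> \<alpha> j * \<theta> ^ (2^j)) x y"
      using IH[OF Suc.prems(2) True] reach_eta_pos[OF \<beta>(1) \<alpha>_pos, of j]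
      by (intro close_lengthen) auto
    moreover have "reach_eta \<beta> \<alpha> j * \<theta> ^ 16 \<le> reach_eta \<beta> \<alpha> j * \<theta> ^ (2^j)"
      using \<open>(2::nat)^j \<le> 8\<close> \<theta>_pos \<theta>_le_1 reach_eta_pos[OF \<beta>(1) \<alpha>_pos, of j]
      by (intro mult_left_mono power_decreasing) auto
    ultimately show ?thesis
      using reach_eta_Suc_le[of j] by (auto intro: close_antimono simp: mult_2)
  next
    case False
    thus ?thesis using Suc.prems IH by (intro close_if_large_overlap) (auto simp: reach.simps)
  qed
qed

definition scattered :: "nat \<Rightarrow> 'a set \<Rightarrow> bool" where
  "scattered k D \<longleftrightarrow> D \<subseteq> V \<and> (\<forall>x\<in>D. \<forall>y\<in>D. x \<noteq> y \<longrightarrow> y \<notin> R (Suc k) x)"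

lemma scattered_Suc: "scattered (Suc k) D \<Longrightarrow> scattered k D"
  unfolding scattered_def by (metis reach_mono le_SucI order_refl subsetD)

lemma finite_scattered: "scattered k D \<Longrightarrow> finite D"
  unfolding scattered_def using finite_V finite_subset by blast

lemma card_overlap_lt_if_not_reach:
  "x \<in> V \<Longrightarrow> y \<in> V \<Longrightarrow> y \<notin> R (Suc k) x \<Longrightarrow> real (card (R k x \<inter> R k y)) < \<alpha> * real (card V)"
  by (auto simp: reach.simps)

text \<open>Five sets of size about n/4 with overlaps below alpha n cannot fit into V.\<close>
lemma card_scattered_le_4:
  assumes "scattered k D" shows "card D \<le> 4"
proof (rule ccontr)
  assume "\<not> card D \<le> 4"
  hence "5 \<le> card D" by simp
  then obtain D' where D': "D' \<subseteq> D" "card D' = 5" using obtain_subset_with_card_n by metis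
  have finD': "finite D'" using D'(2) by (intro card_ge_0_finite) simp
  have DV: "D' \<subseteq> V" using assms D'(1) unfolding scattered_def by blast
  have "(\<Sum>x\<in>D'. real (card (R k x))) - (\<Sum>x\<in>D'. \<Sum>y\<in>D'-{x}. real (card (R k x \<inter> R k y)))
      \<le> real (card (\<Union>x\<in>D'. R k x))"
    using finD' finite_reach by (rule card_UN_ge_sum_minus_overlaps)
  also have "\<dots> \<le> real (card V)"
    using reach_subset finite_V by (simp add: card_mono UN_least)
  moreover have "(\<Sum>x\<in>D'. real (card (R k x))) \<ge> (\<Sum>x\<in>D'. (1/4 - 3*\<gamma>) * real (card V))"
    using DV card_reach_ge by (intro sum_mono) auto
  moreover have "(\<Sum>x\<in>D'. \<Sum>y\<in>D'-{x}. real (card (R k x \<inter> R k y))) \<le> (\<Sum>x\<in>D'. \<Sum>y\<in>D'-{x}. \<alpha> * real (card V))"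
  proof (intro sum_mono)
    fix x y assume "x \<in> D'" "y \<in> D' - {x}"
    hence "x \<in> D" "y \<in> D" "x \<noteq> y" using D'(1) by auto
    hence "x \<in> V" "y \<in> V" "y \<notin> R (Suc k) x" using assms by (auto simp: scattered_def)
    thus "real (card (R k x \<inter> R k y)) \<le> \<alpha> * real (card V)"
      by (meson card_overlap_lt_if_not_reach less_imp_le)
  qed
  moreover have "(\<Sum>x\<in>D'. \<Sum>y\<in>D'-{x}. \<alpha> * real (card V)) = 20 * (\<alpha> * real (card V))"
    using D'(2) finD' by (simp add: card_Diff_singleton)
  moreover have "(\<Sum>x\<in>D'. (1/4 - 3*\<gamma>) * real (card V)) = 5 * ((1/4 - 3*\<gamma>) * real (card V))"
    using D'(2) by simp
  ultimately have "real (card V) \<ge> 5 * ((1/4 - 3*\<gamma>) * real (card V)) - 20 * (\<alpha> * real (card V))"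
    by linarith
  hence "0 \<ge> (5 * (1/4 - 3*\<gamma>) - 20 * \<alpha> - 1) * real (card V)" by (simp add: algebra_simps)
  moreover have "5 * (1/4 - 3*\<gamma>) - 20 * \<alpha> - 1 > 0" using \<gamma> by simp
  ultimately show False using card_V_pos by (simp add: mult_le_0_iff)
qed

definition closed_partition :: "'a set set \<Rightarrow> bool" where
  "closed_partition P \<longleftrightarrow> partition_on V P \<and> card P \<le> 4 \<and>
     (\<forall>U\<in>P. closed_set V E 16 (part_eta \<beta> \<alpha>) U \<and> real (card U) \<ge> (1/4 - 4*\<gamma>) * real (card V))"

lemma stray_eta_le: "stray_pair_eta \<beta> \<alpha> \<le> stray_core_eta \<beta> \<alpha>" "stray_core_eta \<beta> \<alpha> \<le> reach_eta \<beta> \<alpha> 4"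
proof -
  define f where "f = \<alpha> / 2 * \<beta> / 4^67"
  have "\<alpha> / 2 * \<beta> \<le> 1" using \<alpha>_le \<alpha>_pos \<beta> by (intro mult_le_one) auto
  hence f: "f \<le> 1" unfolding f_def by simp
  have eq1: "stray_pair_eta \<beta> \<alpha> = stray_core_eta \<beta> \<alpha> * f"
    and eq2: "stray_core_eta \<beta> \<alpha> = reach_eta \<beta> \<alpha> 4 * f"
    unfolding stray_pair_eta_def stray_core_eta_def f_def by simp_all
  show "stray_pair_eta \<beta> \<alpha> \<le> stray_core_eta \<beta> \<alpha>" unfolding eq1
    using mult_left_le[OF f] stray_core_eta_pos[OF \<beta>(1) \<alpha>_pos] by simp
  show "stray_core_eta \<beta> \<alpha> \<le> reach_eta \<beta> \<alpha> 4" unfolding eq2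
    using mult_left_le[OF f] reach_eta_pos[OF \<beta>(1) \<alpha>_pos, of 4] by simp
qed

lemma close_part_eta:
  assumes "close V E L \<eta> x y" "1 \<le> L" "L \<le> 16" "stray_pair_eta \<beta> \<alpha> \<le> \<eta>"
  shows "close V E 16 (part_eta \<beta> \<alpha>) x y"
proof -
  have "0 \<le> stray_pair_eta \<beta> \<alpha>" unfolding stray_pair_eta_def
    using stray_core_eta_pos[OF \<beta>(1) \<alpha>_pos] \<alpha>_pos \<beta> by simp
  hence "close V E 16 (\<eta> * \<theta> ^ 16) x y" using assms by (intro close_at_16) auto
  moreover have "part_eta \<beta> \<alpha> \<le> \<eta> * \<theta> ^ 16"
    unfolding part_eta_def using assms(4) \<theta>_pos by (intro mult_right_mono) auto
  ultimately show ?thesis by (rule close_antimono)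
qed

lemma closed_partition_if_reach_4:
  assumes "\<And>x y. x \<in> V \<Longrightarrow> y \<in> V \<Longrightarrow> y \<in> R 4 x"
  shows "closed_partition {V}"
proof -
  have "closed_set V E 16 (part_eta \<beta> \<alpha>) V"
    unfolding closed_set_def
  proof (intro ballI impI)
    fix x y assume "x \<in> V" "y \<in> V"
    hence "close V E 16 (reach_eta \<beta> \<alpha> 4) x y" using close_if_mem_reach[of 4 x y] assms by simp
    thus "close V E 16 (part_eta \<beta> \<alpha>) x y" by (rule close_part_eta) (use stray_eta_le in auto)
  qed
  moreover have "(1/4 - 4*\<gamma>) * real (card V) \<le> real (card V)"
    using \<gamma> card_V_pos by (simp add: mult_le_cancel_right1)
  ultimately show ?thesis
    unfolding closed_partition_def using partition_on_space[OF V_nonempty] by simp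
qed

end

section \<open>The partition\<close>

text \<open>The elements of D are the centres of the parts: a part consists of the vertices reaching only
  its own centre (the core) together with the strays assigned to it.\<close>
locale maximal_scattered = closeness_degree +
  fixes k :: nat and D :: "'a set"
  assumes k_le: "k \<le> 2" and scattered_D: "scattered (Suc k) D"
    and maximal: "\<And>D'. scattered k D' \<Longrightarrow> card D' \<le> card D"
begin

definition core :: "'a \<Rightarrow> 'a set" where
  "core v = R (Suc k) v - (\<Union>v'\<in>D - {v}. R (Suc k) v')"

definition strays :: "'a set" where
  "strays = V - (\<Union>v\<in>D. core v)"

definition home_bound :: real where
  "home_bound = ((1/4 - 3*\<gamma>) - 12*\<alpha>) / 4 * real (card V)"

definition home :: "'a \<Rightarrow> 'a" where
  "home w = (SOME v. v \<in> D \<and> real (card (R 0 w \<inter> core v)) \<ge> home_bound)"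

definition part :: "'a \<Rightarrow> 'a set" where
  "part v = core v \<union> {w \<in> strays. home w = v}"

lemma finite_D: "finite D" and D_subset: "D \<subseteq> V" and card_D_le_4: "card D \<le> 4"
  using finite_scattered[OF scattered_D] card_scattered_le_4[OF scattered_D] scattered_D
  unfolding scattered_def by auto

lemma D_far: "x \<in> D \<Longrightarrow> y \<in> D \<Longrightarrow> x \<noteq> y \<Longrightarrow> y \<notin> R (Suc k) x"
  using scattered_Suc[OF scattered_D] unfolding scattered_def by blast

lemma reach_cover: "u \<in> V \<Longrightarrow> \<exists>v\<in>D. u \<in> R (Suc k) v"
proof (cases "u \<in> D")
  case False
  assume u: "u \<in> V"
  have "\<not> scattered k (insert u D)" using maximal[of "insert u D"] False finite_D by auto
  then obtain x y where xy: "x \<in> insert u D" "y \<in> insert u D" "x \<noteq> y" "y \<in> R (Suc k) x"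
    using D_subset u unfolding scattered_def by blast
  thus ?thesis using D_far reach_commute[OF u, of _ "Suc k"] D_subset by blast
qed (use self_mem_reach D_subset in blast)

lemma card_overlap_lt: "v \<in> D \<Longrightarrow> v' \<in> D \<Longrightarrow> v \<noteq> v' \<Longrightarrow>
    real (card (R (Suc k) v \<inter> R (Suc k) v')) < \<alpha> * real (card V)"
  using scattered_D D_subset unfolding scattered_def by (intro card_overlap_lt_if_not_reach) auto

lemma sum_overlaps_le: "v \<in> D \<Longrightarrow>
    (\<Sum>v'\<in>D - {v}. real (card (R (Suc k) v \<inter> R (Suc k) v'))) \<le> 3 * (\<alpha> * real (card V))"
proof -
  assume v: "v \<in> D"
  have "(\<Sum>v'\<in>D - {v}. real (card (R (Suc k) v \<inter> R (Suc k) v'))) \<le> (\<Sum>v'\<in>D - {v}. \<alpha> * real (card V))"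
    using card_overlap_lt v by (intro sum_mono) (auto intro: less_imp_le)
  also have "\<dots> \<le> 3 * (\<alpha> * real (card V))"
    using card_D_le_4 v finite_D \<alpha>_pos card_V_pos by (simp add: card_Diff_singleton)
  finally show ?thesis .
qed

lemma card_core_ge: "v \<in> D \<Longrightarrow> real (card (core v)) \<ge> (1/4 - 4*\<gamma>) * real (card V)"
proof -
  assume v: "v \<in> D"
  have "R (Suc k) v \<subseteq> core v \<union> (\<Union>v'\<in>D - {v}. R (Suc k) v \<inter> R (Suc k) v')"
    unfolding core_def by blast
  hence "card (R (Suc k) v) \<le> card (core v \<union> (\<Union>v'\<in>D - {v}. R (Suc k) v \<inter> R (Suc k) v'))"
    using finite_D finite_reach by (intro card_mono) (auto simp: core_def)
  also have "\<dots> \<le> card (core v) + card (\<Union>v'\<in>D - {v}. R (Suc k) v \<inter> R (Suc k) v')"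
    by (rule card_Un_le)
  also have "card (\<Union>v'\<in>D - {v}. R (Suc k) v \<inter> R (Suc k) v') \<le> (\<Sum>v'\<in>D - {v}. card (R (Suc k) v \<inter> R (Suc k) v'))"
    using finite_D by (intro card_UN_le) auto
  finally have "real (card (R (Suc k) v))
      \<le> real (card (core v) + (\<Sum>v'\<in>D - {v}. card (R (Suc k) v \<inter> R (Suc k) v')))"
    by (simp only: of_nat_le_iff)
  moreover have "(1/4 - 3*\<gamma>) * real (card V) \<le> real (card (R (Suc k) v))"
    using card_reach_ge D_subset v by blast
  moreover have "(1/4 - 4*\<gamma>) * real (card V) + 3 * (\<alpha> * real (card V)) \<le> (1/4 - 3*\<gamma>) * real (card V)"
    using \<gamma> card_V_pos by (simp add: algebra_simps)
  ultimately show ?thesis using sum_overlaps_le[OF v] by (simp add: of_nat_sum)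
qed

text \<open>If two core vertices of v were far apart, replacing v by both would give a larger
  scattered set of level k.\<close>
lemma core_reach:
  assumes v: "v \<in> D" and u: "u \<in> core v" "u' \<in> core v" "u \<noteq> u'"
  shows "u' \<in> R (Suc k) u"
proof (rule ccontr)
  assume far: "u' \<notin> R (Suc k) u"
  have uV: "u \<in> V" "u' \<in> V" using u reach_subset unfolding core_def by blast+
  have not_in: "z \<notin> R (Suc k) w" "w \<notin> R (Suc k) z" if "w \<in> D - {v}" "z \<in> {u, u'}" for w z
    using that u D_subset reach_commute[of w z "Suc k"] uV unfolding core_def by blast+
  have "u \<notin> D - {v}" "u' \<notin> D - {v}"
    using not_in self_mem_reach uV by blast+
  have "scattered k (insert u (insert u' (D - {v})))"
    unfolding scattered_def
  proof (intro conjI ballI impI)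
    show "insert u (insert u' (D - {v})) \<subseteq> V" using uV D_subset by blast
    fix x y assume "x \<in> insert u (insert u' (D - {v}))" "y \<in> insert u (insert u' (D - {v}))" "x \<noteq> y"
    thus "y \<notin> R (Suc k) x"
      using far reach_commute[OF uV] not_in D_far by auto
  qed
  hence "card (insert u (insert u' (D - {v}))) \<le> card D" by (rule maximal)
  moreover have "card (insert u (insert u' (D - {v}))) = card D + 1"
    using \<open>u \<notin> D - {v}\<close> \<open>u' \<notin> D - {v}\<close> u(3) v finite_D
    by (simp add: card_Diff_singleton) (metis Suc_pred card_gt_0_iff empty_iff)
  ultimately show False by simp
qed

lemma close_in_core:
  assumes "v \<in> D" "u \<in> core v" "u' \<in> core v" "u \<noteq> u'"
  shows "close V E (2^Suc k) (reach_eta \<beta> \<alpha> 4) u u'"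
proof -
  have "u \<in> V" using assms(2) reach_subset unfolding core_def by blast
  hence "close V E (2^Suc k) (reach_eta \<beta> \<alpha> (Suc k)) u u'"
    using k_le core_reach[OF assms] by (intro close_if_mem_reach) auto
  thus ?thesis by (rule close_antimono) (use reach_eta_antimono[of "Suc k" 4] k_le in auto)
qed

lemma stray_not_in_core: "w \<in> strays \<Longrightarrow> v \<in> D \<Longrightarrow> w \<notin> core v"
  unfolding strays_def by blast

lemma card_strays_le: "real (card strays) \<le> 12 * (\<alpha> * real (card V))"
proof -
  have "strays \<subseteq> (\<Union>v\<in>D. \<Union>v'\<in>D - {v}. R (Suc k) v \<inter> R (Suc k) v')"
  proof
    fix w assume w: "w \<in> strays"
    then obtain v where v: "v \<in> D" "w \<in> R (Suc k) v" using reach_cover unfolding strays_def by blast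
    moreover have "w \<notin> core v" using w v(1) by (rule stray_not_in_core)
    ultimately obtain v' where "v' \<in> D - {v}" "w \<in> R (Suc k) v'" unfolding core_def by blast
    thus "w \<in> (\<Union>v\<in>D. \<Union>v'\<in>D - {v}. R (Suc k) v \<inter> R (Suc k) v')" using v by blast
  qed
  hence "card strays \<le> card (\<Union>v\<in>D. \<Union>v'\<in>D - {v}. R (Suc k) v \<inter> R (Suc k) v')"
    using finite_D finite_reach by (intro card_mono) auto
  also have "\<dots> \<le> (\<Sum>v\<in>D. card (\<Union>v'\<in>D - {v}. R (Suc k) v \<inter> R (Suc k) v'))"
    using finite_D by (rule card_UN_le)
  also have "\<dots> \<le> (\<Sum>v\<in>D. \<Sum>v'\<in>D - {v}. card (R (Suc k) v \<inter> R (Suc k) v'))"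
    using finite_D by (intro sum_mono card_UN_le) auto
  finally have "real (card strays) \<le> real (\<Sum>v\<in>D. \<Sum>v'\<in>D - {v}. card (R (Suc k) v \<inter> R (Suc k) v'))"
    by (simp only: of_nat_le_iff)
  also have "\<dots> = (\<Sum>v\<in>D. \<Sum>v'\<in>D - {v}. real (card (R (Suc k) v \<inter> R (Suc k) v')))"
    by (simp add: of_nat_sum)
  also have "\<dots> \<le> (\<Sum>v\<in>D. 3 * (\<alpha> * real (card V)))" by (intro sum_mono sum_overlaps_le)
  also have "\<dots> \<le> 4 * (3 * (\<alpha> * real (card V)))"
    using card_D_le_4 \<alpha>_pos card_V_pos by (simp add: mult_right_mono)
  finally show ?thesis by simp
qed

text \<open>The closeness neighbourhood of w has at least n/4 - 3 gamma n vertices, of which at most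
  12 alpha n are strays, so some core receives a quarter of the rest.\<close>
lemma home_spec: "w \<in> V \<Longrightarrow> home w \<in> D \<and> real (card (R 0 w \<inter> core (home w))) \<ge> home_bound"
proof -
  assume w: "w \<in> V"
  have "\<exists>v\<in>D. real (card (R 0 w \<inter> core v)) \<ge> home_bound"
  proof (rule ccontr)
    assume "\<not> ?thesis"
    hence lt: "\<forall>v\<in>D. real (card (R 0 w \<inter> core v)) < home_bound" by auto
    have "D \<noteq> {}" using reach_cover V_nonempty by blast
    have "R 0 w \<subseteq> strays \<union> (\<Union>v\<in>D. R 0 w \<inter> core v)"
      using reach_subset[of 0 w] unfolding strays_def by blast
    moreover have "strays \<union> (\<Union>v\<in>D. R 0 w \<inter> core v) \<subseteq> V"
      using reach_subset[of 0 w] unfolding strays_def by blast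
    ultimately have "card (R 0 w) \<le> card (strays \<union> (\<Union>v\<in>D. R 0 w \<inter> core v))"
      using finite_V by (meson card_mono finite_subset)
    also have "\<dots> \<le> card strays + card (\<Union>v\<in>D. R 0 w \<inter> core v)" by (rule card_Un_le)
    also have "card (\<Union>v\<in>D. R 0 w \<inter> core v) \<le> (\<Sum>v\<in>D. card (R 0 w \<inter> core v))"
      using finite_D by (rule card_UN_le)
    finally have "real (card (R 0 w)) \<le> real (card strays + (\<Sum>v\<in>D. card (R 0 w \<inter> core v)))"
      by (simp only: of_nat_le_iff)
    hence "real (card (R 0 w)) \<le> real (card strays) + (\<Sum>v\<in>D. real (card (R 0 w \<inter> core v)))"
      by (simp add: of_nat_sum)
    also have "(\<Sum>v\<in>D. real (card (R 0 w \<inter> core v))) < (\<Sum>v\<in>D. home_bound)"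
      using lt finite_D \<open>D \<noteq> {}\<close> by (intro sum_strict_mono) auto
    also have "(\<Sum>v\<in>D. home_bound) \<le> 4 * home_bound"
      using card_D_le_4 \<gamma> card_V_pos by (simp add: home_bound_def mult_right_mono)
    finally show False
      using card_strays_le card_reach_ge[OF w, of 0] unfolding home_bound_def by (simp add: field_simps)
  qed
  thus ?thesis unfolding home_def by (rule someI2_bex) blast
qed

lemma home_bound_ge: "\<alpha> / 2 * real (card V) \<le> home_bound - 1"
proof -
  have "(1/20 + \<alpha>/2) * real (card V) \<le> home_bound"
    unfolding home_bound_def using \<gamma> card_V_pos by (intro mult_right_mono) auto
  moreover have "\<alpha> * real (card V) \<le> 1/10000 * real (card V)"
    using \<alpha>_le card_V_pos by (intro mult_right_mono) auto
  ultimately show ?thesis using large_\<alpha> by (simp add: algebra_simps)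
qed

lemma two_pow_Suc_k: "2 \<le> (2::nat)^Suc k" "(2::nat)^Suc k \<le> 8"
  using power_increasing[of 1 "Suc k" "2::nat"] power_increasing[of "Suc k" 3 "2::nat"] k_le by auto

lemma close_stray_core:
  assumes w: "w \<in> strays" and u: "u \<in> core (home w)"
  shows "close V E (1 + 2^Suc k) (stray_core_eta \<beta> \<alpha>) w u"
proof -
  have wV: "w \<in> V" using w unfolding strays_def by blast
  note h = home_spec[OF wV]
  define Z where "Z = R 0 w \<inter> core (home w) - {u}"
  have finZ: "finite Z" using finite_reach[of 0 w] unfolding Z_def by simp
  have "card (R 0 w \<inter> core (home w)) \<le> card (insert u Z)"
    using finite_reach[of 0 w] by (intro card_mono) (auto simp: Z_def)
  also have "\<dots> \<le> card Z + 1" using finZ by (simp add: card_insert_if)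
  finally have "real (card Z) \<ge> \<alpha> / 2 * real (card V)" using h home_bound_ge by linarith
  moreover have "Z \<subseteq> V" "w \<notin> Z" "u \<notin> Z"
    using reach_subset[of 0 w] stray_not_in_core[OF w h[THEN conjunct1]] unfolding Z_def by auto
  moreover have "close V E 1 \<beta> w z" if "z \<in> Z" for z using that unfolding Z_def by (simp add: closeN_def)
  moreover have "close V E (2^Suc k) (reach_eta \<beta> \<alpha> 4) z u" if "z \<in> Z" for z
    using that u h by (intro close_in_core[of "home w"]) (auto simp: Z_def)
  ultimately have "close V E (1 + 2^Suc k) (\<alpha> / 2 * \<beta> * reach_eta \<beta> \<alpha> 4 / 4^67) w u"
    using two_pow_Suc_k \<beta> reach_eta_pos[OF \<beta>(1) \<alpha>_pos] \<alpha>_pos large_core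
    by (intro close_via_middle[OF finite_V]) auto
  thus ?thesis unfolding stray_core_eta_def .
qed

lemma close_strays:
  assumes w: "w \<in> strays" "w' \<in> strays" "home w = home w'"
  shows "close V E (1 + (1 + 2^Suc k)) (stray_pair_eta \<beta> \<alpha>) w w'"
proof -
  have wV: "w \<in> V" using w unfolding strays_def by blast
  note h = home_spec[OF wV]
  define Z where "Z = R 0 w \<inter> core (home w)"
  have "real (card Z) \<ge> \<alpha> / 2 * real (card V)" using h home_bound_ge unfolding Z_def by linarith
  moreover have "Z \<subseteq> V" "w \<notin> Z" "w' \<notin> Z"
    using reach_subset[of 0 w] stray_not_in_core w h unfolding Z_def by auto
  moreover have "close V E 1 \<beta> w z" if "z \<in> Z" for z using that unfolding Z_def by (simp add: closeN_def)
  moreover have "close V E (1 + 2^Suc k) (stray_core_eta \<beta> \<alpha>) z w'" if "z \<in> Z" for z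
  proof -
    have "close V E (1 + 2^Suc k) (stray_core_eta \<beta> \<alpha>) w' z"
      using that w(3) unfolding Z_def by (intro close_stray_core[OF w(2)]) auto
    thus ?thesis by (metis close_commute)
  qed
  ultimately have "close V E (1 + (1 + 2^Suc k)) (\<alpha> / 2 * \<beta> * stray_core_eta \<beta> \<alpha> / 4^67) w w'"
    using two_pow_Suc_k \<beta> stray_core_eta_pos[OF \<beta>(1) \<alpha>_pos] \<alpha>_pos large_stray
    by (intro close_via_middle[OF finite_V]) auto
  thus ?thesis unfolding stray_pair_eta_def .
qed

lemma part_closed: "v \<in> D \<Longrightarrow> closed_set V E 16 (part_eta \<beta> \<alpha>) (part v)"
  unfolding closed_set_def
proof (intro ballI impI)
  fix x y assume v: "v \<in> D" and xy: "x \<in> part v" "y \<in> part v" "x \<noteq> y"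
  have L: "1 \<le> (2::nat)^Suc k" "(2::nat)^Suc k \<le> 16" "1 + (2::nat)^Suc k \<le> 16"
    "1 + (1 + (2::nat)^Suc k) \<le> 16" using two_pow_Suc_k by auto
  consider "x \<in> core v" "y \<in> core v" | "x \<in> core v" "y \<in> strays" "home y = v"
    | "x \<in> strays" "home x = v" "y \<in> core v" | "x \<in> strays" "y \<in> strays" "home x = v" "home y = v"
    using xy(1,2) unfolding part_def by blast
  thus "close V E 16 (part_eta \<beta> \<alpha>) x y"
  proof cases
    case 1 thus ?thesis
      using close_in_core[OF v _ _ xy(3)] L stray_eta_le by (intro close_part_eta) force+
  next
    case 2 thus ?thesis
      using close_stray_core[of y x] close_commute L stray_eta_le by (intro close_part_eta) force+
  next
    case 3 thus ?thesis
      using close_stray_core[of x y] L stray_eta_le by (intro close_part_eta) force+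
  next
    case 4 thus ?thesis
      using close_strays[of x y] L by (intro close_part_eta) force+
  qed
qed

lemma card_part_ge: "v \<in> D \<Longrightarrow> real (card (part v)) \<ge> (1/4 - 4*\<gamma>) * real (card V)"
proof -
  assume v: "v \<in> D"
  have "part v \<subseteq> V" using reach_subset unfolding part_def core_def strays_def by blast
  hence "card (core v) \<le> card (part v)" using finite_V by (intro card_mono) (auto simp: part_def intro: finite_subset)
  thus ?thesis using card_core_ge[OF v] by linarith
qed

lemma partition_on_parts: "partition_on V (part ` D)"
proof (rule partition_onI)
  show "\<Union>(part ` D) = V"
  proof
    show "\<Union>(part ` D) \<subseteq> V" using reach_subset unfolding part_def core_def strays_def by blast
    show "V \<subseteq> \<Union>(part ` D)"
    proof
      fix u assume u: "u \<in> V"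
      show "u \<in> \<Union>(part ` D)"
      proof (cases "u \<in> strays")
        case True thus ?thesis using home_spec[OF u] unfolding part_def by blast
      next
        case False thus ?thesis using u unfolding strays_def part_def by blast
      qed
    qed
  qed
  show "disjnt p q" if pq: "p \<in> part ` D" "q \<in> part ` D" "p \<noteq> q" for p q
  proof -
    obtain v v' where v: "v \<in> D" "p = part v" and v': "v' \<in> D" "q = part v'" using pq(1,2) by blast
    hence "v \<noteq> v'" using pq(3) by blast
    hence "core v \<inter> core v' = {}" unfolding core_def using v v' by blast
    thus ?thesis unfolding disjnt_def part_def v(2) v'(2)
      using stray_not_in_core v(1) v'(1) \<open>v \<noteq> v'\<close> by blast
  qed
  show "{} \<notin> part ` D"
  proof
    assume "{} \<in> part ` D"
    then obtain v where "v \<in> D" "part v = {}" by blast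
    moreover have "0 < (1/4 - 4*\<gamma>) * real (card V)" using \<gamma> card_V_pos by simp
    ultimately show False using card_part_ge[of v] by simp
  qed
qed

lemma closed_partition_parts: "closed_partition (part ` D)"
  unfolding closed_partition_def
  using partition_on_parts part_closed card_part_ge card_image_le[OF finite_D, of part] card_D_le_4
  by auto

end

context closeness_degree
begin

definition max_scattered :: "nat \<Rightarrow> nat" where
  "max_scattered k = Max (card ` Collect (scattered k))"

lemma max_scattered:
  "scattered k D \<Longrightarrow> card D \<le> max_scattered k"
  "\<exists>D. scattered k D \<and> card D = max_scattered k"
proof -
  have fin: "finite (card ` Collect (scattered k))"
    by (rule finite_subset[of _ "{..4}"]) (auto dest: card_scattered_le_4)
  have "scattered k {}" unfolding scattered_def by simp
  hence "card ` Collect (scattered k) \<noteq> {}" by blast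
  thus "\<exists>D. scattered k D \<and> card D = max_scattered k"
    using Max_in[OF fin] unfolding max_scattered_def by fastforce
  show "scattered k D \<Longrightarrow> card D \<le> max_scattered k"
    unfolding max_scattered_def using fin by (intro Max_ge) auto
qed

lemma closed_partition_if_max_scattered_eq:
  assumes "k \<le> 2" "max_scattered (Suc k) = max_scattered k"
  shows "\<exists>P. closed_partition P"
proof -
  obtain D where D: "scattered (Suc k) D" "card D = max_scattered (Suc k)" using max_scattered(2) by blast
  interpret maximal_scattered V E \<beta> \<gamma> k D
    using assms D max_scattered(1)[of k] by unfold_locales auto
  show ?thesis using closed_partition_parts by blast
qed

text \<open>The maximal sizes of scattered sets decrease with the level from at most 4; unless they
  stabilise at some level k \<le> 2, they reach 1 at level 3, and then any two vertices reach each
  other at level 4.\<close>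
theorem closed_partition_exists: "\<exists>P. closed_partition P"
proof (cases "\<exists>k\<le>2. max_scattered (Suc k) = max_scattered k")
  case True thus ?thesis using closed_partition_if_max_scattered_eq by blast
next
  case False
  have dec: "max_scattered (Suc k) \<le> max_scattered k" for k
    using max_scattered scattered_Suc by metis
  have "max_scattered 0 \<le> 4" using max_scattered(2)[of 0] card_scattered_le_4 by metis
  moreover have "1 \<le> max_scattered 3"
  proof -
    obtain v where "v \<in> V" using V_nonempty by blast
    hence "scattered 3 {v}" unfolding scattered_def by simp
    thus ?thesis using max_scattered(1) by fastforce
  qed
  moreover have "max_scattered (Suc k) < max_scattered k" if "k \<le> 2" for k
    using False dec[of k] that by force
  hence "max_scattered 1 < max_scattered 0" "max_scattered 2 < max_scattered 1"
    "max_scattered 3 < max_scattered 2"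
    using numeral_2_eq_2 numeral_3_eq_3 by (metis One_nat_def le_refl zero_le one_le_numeral)+
  ultimately have M3: "max_scattered 3 = 1" by linarith
  have "y \<in> R 4 x" if "x \<in> V" "y \<in> V" for x y
  proof (rule ccontr)
    assume "y \<notin> R 4 x"
    moreover have "x \<noteq> y" using self_mem_reach[OF that(1)] calculation by blast
    ultimately have "scattered 3 {x, y}"
      using that reach_commute[OF that] unfolding scattered_def by (auto simp: numeral_eq_Suc)
    thus False using max_scattered(1) M3 \<open>x \<noteq> y\<close> by fastforce
  qed
  thus ?thesis using closed_partition_if_reach_4 by blast
qed

end

lemma closed_partition_of_large_graph:
  fixes V :: "'a set"
  assumes "finite V" "0 < \<beta>" "\<beta> \<le> 1" "0 < \<gamma>" "\<gamma> \<le> 1/100"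
    and "\<forall>v\<in>V. real (card (closeN V E 1 \<beta> v)) \<ge> (1/4 - 3*\<gamma>) * real (card V)"
    and "order_threshold \<beta> (\<gamma> / 100) \<le> real (card V)" "\<eta> \<le> part_eta \<beta> (\<gamma> / 100)"
  shows "\<exists>P. partition_on V P \<and> card P \<le> 4 \<and>
    (\<forall>U\<in>P. closed_set V E 16 \<eta> U \<and> real (card U) \<ge> (1/4 - 4*\<gamma>) * real (card V))"
proof -
  interpret closeness_degree V E \<beta> \<gamma> using assms by unfold_locales auto
  obtain P where "closed_partition P" using closed_partition_exists by blast
  thus ?thesis unfolding closed_partition_def using assms(8) by (blast intro: closed_set_antimono)
qed

theorem lemma5p8:
  shows "\<exists>\<gamma>0::real. \<gamma>0 > 0 \<and>
    (\<forall>\<epsilon> \<gamma>::real. 0 < \<epsilon> \<and> \<epsilon> \<le> \<gamma>0 \<and> 0 < \<gamma> \<and> \<gamma> \<le> \<gamma>0 \<longrightarrow>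
      (\<exists>\<eta>0::real. \<eta>0 > 0 \<and>
        (\<forall>\<eta>::real. 0 < \<eta> \<and> \<eta> \<le> \<eta>0 \<longrightarrow>
          (\<exists>n0::nat. \<forall>n\<ge>n0. \<forall>(V::nat set) (E::nat set set).
             is_3graph V E \<and> card V = n \<and>
             (\<forall>v\<in>V. real (card (closeN V E 1 (\<gamma> * \<epsilon>) v)) \<ge> (1/4 - 3 * \<gamma>) * real n)
             \<longrightarrow> (\<exists>P. partition_on V P \<and> card P \<le> 4 \<and>
                   (\<forall>U\<in>P. closed_set V E 16 \<eta> U \<and> real (card U) \<ge> (1/4 - 4 * \<gamma>) * real n))))))"
  apply (rule exI[of _ "1/100"], intro conjI allI impI, simp)
  subgoal for \<epsilon> \<gamma>
    apply (rule exI[of _ "part_eta (\<gamma> * \<epsilon>) (\<gamma> / 100)"], intro conjI allI impI)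
     apply (simp add: part_eta_pos)
    subgoal for \<eta>
      apply (rule exI[of _ "nat \<lceil>order_threshold (\<gamma> * \<epsilon>) (\<gamma> / 100)\<rceil>"], intro allI impI)
      subgoal for n V E
        using closed_partition_of_large_graph[of V "\<gamma> * \<epsilon>" \<gamma> E \<eta>]
          real_nat_ceiling_ge[of "order_threshold (\<gamma> * \<epsilon>) (\<gamma> / 100)"]
        by (auto simp: is_3graph_def mult_le_one)
      done
    done
  done

end
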